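(* There is an absolute constant $C>0$ such that the following holds. Let $p\ge3$, $\mu>0$, $b,y\in\mathbb{R}^n$, and define $h:\mathbb{R}^n\to\mathbb{R}$ by $h(x)=\sum_{i=1}^n|x_i-b_i|^p+\mu\|x-y\|_2^2$. Then for every $x$ at which $h$ is thrice differentiable (all $x$ if $p>3$; all $x$ with $x_i\ne b_i$ for every $i$ if $p=3$) and all $u,w\in\mathbb{R}^n$, $$|\nabla^3 h(x)[u,u,w]|\le C\,p\,\mu^{-1/(p-2)}\,\|w\|_2\,u^\top\nabla^2 h(x)u.$$ *)

theory Defs
  imports "HOL-Analysis.Analysis"
begin

text \<open>Vectors in R^n are represented as functions nat => real; only the
coordinates i < n are relevant.  The dimension n is an ordinary variable so
that the constant C can be chosen independently of n.\<close>

definition hfun :: "nat \<Rightarrow> real \<Rightarrow> real \<Rightarrow> (nat \<Rightarrow> real) \<Rightarrow> (nat \<Rightarrow> real) \<Rightarrow> (nat \<Rightarrow> real) \<Rightarrow> real" where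
  "hfun n p \<mu> b y x = (\<Sum>i<n. \<bar>x i - b i\<bar> powr p) + \<mu> * (\<Sum>i<n. (x i - y i)^2)"

definition norm2 :: "nat \<Rightarrow> (nat \<Rightarrow> real) \<Rightarrow> real" where
  "norm2 n w = sqrt (\<Sum>i<n. (w i)^2)"

definition hess_form :: "((nat \<Rightarrow> real) \<Rightarrow> real) \<Rightarrow> (nat \<Rightarrow> real) \<Rightarrow> (nat \<Rightarrow> real) \<Rightarrow> real" where
  "hess_form f x u = deriv (deriv (\<lambda>t. f (\<lambda>i. x i + t * u i))) 0"

definition third_form :: "((nat \<Rightarrow> real) \<Rightarrow> real) \<Rightarrow> (nat \<Rightarrow> real) \<Rightarrow> (nat \<Rightarrow> real) \<Rightarrow> (nat \<Rightarrow> real) \<Rightarrow> real" where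
  "third_form f x u w = deriv (\<lambda>r. hess_form f (\<lambda>i. x i + r * w i) u) 0"

end

theory Submission
  imports Defs "HOL-Real_Asymp.Real_Asymp"
begin

text \<open>
  Along the line x + t u the function h is a sum of one-variable terms, so
    D^2 h(x)[u,u]   = sum_i (p(p-1) |x_i - b_i|^(p-2) + 2 \<mu>) u_i^2,
    D^3 h(x)[u,u,w] = sum_i p(p-1)(p-2) sgn(x_i - b_i) |x_i - b_i|^(p-3) w_i u_i^2.
  With C = 4 the claim therefore reduces, coordinate by coordinate, to
  (p-1)(p-2) a^(p-3) \<le> (4/m) (p(p-1) a^(p-2) + \<mu>) for a \<ge> 0 and m = \<mu>^(1/(p-2)).
  If a \<ge> m/4 then a^(p-3) \<le> (4/m) a^(p-2); if a < m/4 then a^(p-3) \<le> \<mu> / (m 4^(p-3)),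
  and 4^(p-3) absorbs (p-1)(p-2)/4.
\<close>

lemma abs_powr_eq_square_powr: "\<bar>y::real\<bar> powr q = (y\<^sup>2) powr (q / 2)"
proof (cases "y = 0")
  case False
  then have "y\<^sup>2 = \<bar>y\<bar> powr 2"
    by (subst powr_numeral) auto
  then have "(y\<^sup>2) powr (q / 2) = \<bar>y\<bar> powr (2 * (q / 2))"
    by (simp only: powr_powr)
  then show ?thesis by simp
qed simp

lemma DERIV_abs_powr:
  fixes q s :: real
  assumes "q > 1 \<or> s \<noteq> 0"
  shows "((\<lambda>s. \<bar>s\<bar> powr q) has_real_derivative q * s * \<bar>s\<bar> powr (q - 2)) (at s)"
proof (cases "s = 0")
  case True
  with assms have "q > 1" by simp
  then have "((\<lambda>y. \<bar>y\<bar> powr q / y) \<longlongrightarrow> 0) (at (0::real))"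
    by real_asymp
  with True show ?thesis
    by (simp add: has_field_derivative_iff)
next
  case False
  then have "((\<lambda>s. (s\<^sup>2) powr (q / 2)) has_real_derivative q / 2 * (s\<^sup>2) powr (q / 2 - 1) * (2 * s)) (at s)"
    by (intro DERIV_fun_powr[simplified] derivative_eq_intros) auto
  moreover have "q / 2 * (s\<^sup>2) powr (q / 2 - 1) * (2 * s) = q * s * \<bar>s\<bar> powr (q - 2)"
    by (simp add: abs_powr_eq_square_powr[of s "q - 2"] diff_divide_distrib)
  ultimately show ?thesis
    by (simp only: abs_powr_eq_square_powr[of _ q])
qed

lemma DERIV_mult_abs_powr:
  fixes q s :: real
  assumes "q > 0"
  shows "((\<lambda>s. s * \<bar>s\<bar> powr q) has_real_derivative (q + 1) * \<bar>s\<bar> powr q) (at s)"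
proof (cases "s = 0")
  case True
  from assms have "((\<lambda>y. y * \<bar>y\<bar> powr q / y) \<longlongrightarrow> 0) (at (0::real))"
    by real_asymp
  with True show ?thesis
    by (simp add: has_field_derivative_iff)
next
  case False
  then have "\<bar>s\<bar> powr 2 = s * s"
    by (simp add: powr_numeral power2_eq_square)
  then have "s * s * \<bar>s\<bar> powr (q - 2) = \<bar>s\<bar> powr q"
    by (metis add_diff_cancel_left' diff_add_cancel mult.commute powr_add)
  moreover have "((\<lambda>s. s * \<bar>s\<bar> powr q) has_real_derivative
      1 * \<bar>s\<bar> powr q + q * s * \<bar>s\<bar> powr (q - 2) * s) (at s)"
    using False by (intro DERIV_mult DERIV_ident DERIV_abs_powr) simp
  ultimately show ?thesis
    by (simp add: algebra_simps)
qed

lemma DERIV_fun_abs_powr: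
  fixes q :: real
  assumes "(f has_real_derivative D) (at t)" and "q > 1 \<or> f t \<noteq> 0"
  shows "((\<lambda>t. \<bar>f t\<bar> powr q) has_real_derivative q * f t * \<bar>f t\<bar> powr (q - 2) * D) (at t)"
  using DERIV_chain2[OF DERIV_abs_powr[OF assms(2)] assms(1)] by simp

lemma DERIV_fun_mult_abs_powr:
  fixes q :: real
  assumes "(f has_real_derivative D) (at t)" and "q > 0"
  shows "((\<lambda>t. f t * \<bar>f t\<bar> powr q) has_real_derivative (q + 1) * \<bar>f t\<bar> powr q * D) (at t)"
  using DERIV_chain2[OF DERIV_mult_abs_powr[OF assms(2)] assms(1)] by simp

lemma hess_form_hfun:
  assumes "p > 2"
  shows "hess_form (hfun n p \<mu> b y) x u
    = (\<Sum>i<n. (p * (p - 1) * \<bar>x i - b i\<bar> powr (p - 2) + 2 * \<mu>) * (u i)\<^sup>2)"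
proof -
  define g where "g t = (\<Sum>i<n. p * ((x i + t * u i - b i) * \<bar>x i + t * u i - b i\<bar> powr (p - 2)) * u i)
      + \<mu> * (\<Sum>i<n. 2 * (x i + t * u i - y i) * u i)" for t
  have "((\<lambda>t. hfun n p \<mu> b y (\<lambda>i. x i + t * u i)) has_real_derivative g t) (at t)" for t
    unfolding hfun_def g_def
  proof (intro DERIV_add DERIV_cmult DERIV_sum)
    fix i
    have "((\<lambda>t. \<bar>x i + t * u i - b i\<bar> powr p) has_real_derivative
        p * (x i + t * u i - b i) * \<bar>x i + t * u i - b i\<bar> powr (p - 2) * u i) (at t)"
      using assms by (intro DERIV_fun_abs_powr) (auto intro!: derivative_eq_intros)
    then show "((\<lambda>t. \<bar>x i + t * u i - b i\<bar> powr p) has_real_derivative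
        p * ((x i + t * u i - b i) * \<bar>x i + t * u i - b i\<bar> powr (p - 2)) * u i) (at t)"
      by (simp add: mult.assoc)
    show "((\<lambda>t. (x i + t * u i - y i)\<^sup>2) has_real_derivative 2 * (x i + t * u i - y i) * u i) (at t)"
      by (auto intro!: derivative_eq_intros)
  qed
  then have deriv_line: "deriv (\<lambda>t. hfun n p \<mu> b y (\<lambda>i. x i + t * u i)) = g"
    by (intro ext DERIV_imp_deriv)
  have deriv_g: "(g has_real_derivative (\<Sum>i<n. p * ((p - 1) * \<bar>x i - b i\<bar> powr (p - 2) * u i) * u i)
      + \<mu> * (\<Sum>i<n. 2 * u i * u i)) (at 0)"
    unfolding g_def[abs_def]
  proof (intro DERIV_add DERIV_cmult DERIV_sum)
    fix i
    have d: "((\<lambda>t. (x i + t * u i - b i) * \<bar>x i + t * u i - b i\<bar> powr (p - 2)) has_real_derivative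
        (p - 2 + 1) * \<bar>x i + 0 * u i - b i\<bar> powr (p - 2) * u i) (at 0)"
      using assms by (intro DERIV_fun_mult_abs_powr) (auto intro!: derivative_eq_intros)
    show "((\<lambda>t. p * ((x i + t * u i - b i) * \<bar>x i + t * u i - b i\<bar> powr (p - 2)) * u i)
        has_real_derivative p * ((p - 1) * \<bar>x i - b i\<bar> powr (p - 2) * u i) * u i) (at 0)"
      using DERIV_cmult_right[OF DERIV_cmult[OF d, of p], of "u i"] by simp
    show "((\<lambda>t. 2 * (x i + t * u i - y i) * u i) has_real_derivative 2 * u i * u i) (at 0)"
      by (auto intro!: derivative_eq_intros)
  qed
  have "hess_form (hfun n p \<mu> b y) x u
      = (\<Sum>i<n. p * ((p - 1) * \<bar>x i - b i\<bar> powr (p - 2) * u i) * u i) + \<mu> * (\<Sum>i<n. 2 * u i * u i)"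
    unfolding hess_form_def deriv_line by (rule DERIV_imp_deriv[OF deriv_g])
  also have "\<dots> = (\<Sum>i<n. p * ((p - 1) * \<bar>x i - b i\<bar> powr (p - 2) * u i) * u i + \<mu> * (2 * u i * u i))"
    by (simp add: sum.distrib sum_distrib_left)
  also have "\<dots> = (\<Sum>i<n. (p * (p - 1) * \<bar>x i - b i\<bar> powr (p - 2) + 2 * \<mu>) * (u i)\<^sup>2)"
    by (rule sum.cong) (simp_all add: power2_eq_square algebra_simps)
  finally show ?thesis .
qed

lemma third_form_hfun:
  assumes "p > 2" and "p > 3 \<or> (\<forall>i<n. x i \<noteq> b i)"
  shows "third_form (hfun n p \<mu> b y) x u w
    = (\<Sum>i<n. p * (p - 1) * (p - 2) * (x i - b i) * \<bar>x i - b i\<bar> powr (p - 4) * w i * (u i)\<^sup>2)"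
proof -
  have "((\<lambda>r. hess_form (hfun n p \<mu> b y) (\<lambda>i. x i + r * w i) u) has_real_derivative
      (\<Sum>i<n. p * (p - 1) * (p - 2) * (x i - b i) * \<bar>x i - b i\<bar> powr (p - 4) * w i * (u i)\<^sup>2)) (at 0)"
    unfolding hess_form_hfun[OF assms(1)]
  proof (rule DERIV_sum)
    fix i assume "i \<in> {..<n}"
    with assms have "p - 2 > 1 \<or> x i + 0 * w i - b i \<noteq> 0" by auto
    then have "((\<lambda>r. \<bar>x i + r * w i - b i\<bar> powr (p - 2)) has_real_derivative
        (p - 2) * (x i + 0 * w i - b i) * \<bar>x i + 0 * w i - b i\<bar> powr (p - 2 - 2) * w i) (at 0)"
      by (intro DERIV_fun_abs_powr) (auto intro!: derivative_eq_intros)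
    from DERIV_cmult_right[OF DERIV_add[OF DERIV_cmult[OF this, of "p * (p - 1)"] DERIV_const[of "2 * \<mu>"]],
        of "(u i)\<^sup>2"]
    show "((\<lambda>r. (p * (p - 1) * \<bar>x i + r * w i - b i\<bar> powr (p - 2) + 2 * \<mu>) * (u i)\<^sup>2) has_real_derivative
        p * (p - 1) * (p - 2) * (x i - b i) * \<bar>x i - b i\<bar> powr (p - 4) * w i * (u i)\<^sup>2) (at 0)"
      by (simp add: algebra_simps)
  qed
  then show ?thesis
    unfolding third_form_def by (rule DERIV_imp_deriv)
qed

lemma square_le_four_powr:
  fixes x :: real
  assumes "x \<ge> 0"
  shows "(x + 2)\<^sup>2 \<le> 4 powr (x + 1)"
proof -
  have "1 \<le> ln (4::real)"
    using ln2_ge_two_thirds ln_realpow[of 2 2] by simp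
  with assms have "exp x \<le> 4 powr x"
    by (simp add: powr_def mult_le_cancel_left1)
  have "(1 + x / 2)\<^sup>2 \<le> (exp (x / 2))\<^sup>2"
    using assms by (intro power_mono exp_ge_add_one_self) auto
  also have "\<dots> = exp x"
    by (simp flip: exp_double)
  finally have "(x + 2)\<^sup>2 \<le> 4 * exp x"
    by (simp add: power2_eq_square algebra_simps)
  also have "\<dots> \<le> 4 * 4 powr x"
    using \<open>exp x \<le> 4 powr x\<close> by simp
  finally show ?thesis
    by (simp add: powr_add)
qed

lemma powr_pred_bound:
  fixes p m a :: real
  assumes p: "p \<ge> 3" and m: "m > 0" and a: "a \<ge> 0"
  shows "(p - 1) * (p - 2) * a powr (p - 3) \<le> 4 / m * (p * (p - 1) * a powr (p - 2) + m powr (p - 2))"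
proof (cases "a \<ge> m / 4")
  case True
  with m have "a > 0" by linarith
  then have "a powr (p - 2) = a powr (p - 3) * a"
    using powr_add[of a "p - 3" 1] by simp
  with True m have "a powr (p - 3) \<le> 4 / m * a powr (p - 2)"
    by (simp add: field_simps mult_left_mono)
  then have "(p - 1) * (p - 2) * a powr (p - 3) \<le> (p - 1) * (p - 2) * (4 / m * a powr (p - 2))"
    using p by (intro mult_left_mono) auto
  also have "\<dots> \<le> p * (p - 1) * (4 / m * a powr (p - 2))"
    using p m by (intro mult_right_mono) auto
  also have "\<dots> = 4 / m * (p * (p - 1) * a powr (p - 2))"
    by (simp add: mult_ac)
  also have "\<dots> \<le> 4 / m * (p * (p - 1) * a powr (p - 2) + m powr (p - 2))"
    using m by (intro mult_left_mono) auto
  finally show ?thesis .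
next
  case False
  have "(p - 1) * (p - 2) \<le> (p - 1)\<^sup>2"
    using p by (simp add: power2_eq_square)
  also have "\<dots> \<le> 4 powr (p - 2)"
    using square_le_four_powr[of "p - 3"] p by simp
  finally have coeff: "(p - 1) * (p - 2) \<le> 4 * 4 powr (p - 3)"
    using powr_add[of 4 "p - 3" 1] by simp
  have "a powr (p - 3) \<le> (m / 4) powr (p - 3)"
    using False a p by (intro powr_mono2) auto
  also have "\<dots> = m powr (p - 3) / 4 powr (p - 3)"
    using m by (simp add: powr_divide)
  finally have "(p - 1) * (p - 2) * a powr (p - 3) \<le> 4 * 4 powr (p - 3) * (m powr (p - 3) / 4 powr (p - 3))"
    by (rule mult_mono[OF coeff]) (use p in auto)
  also have "\<dots> = 4 / m * m powr (p - 2)"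
    using m powr_add[of m "p - 3" 1] by simp
  also have "\<dots> \<le> 4 / m * (p * (p - 1) * a powr (p - 2) + m powr (p - 2))"
    using m p by (intro mult_left_mono) auto
  finally show ?thesis .
qed

lemma third_order_term_bound:
  fixes p \<mu> z v t N :: real
  assumes p: "p \<ge> 3" and \<mu>: "\<mu> > 0" and t: "\<bar>t\<bar> \<le> N"
  shows "\<bar>p * (p - 1) * (p - 2) * z * \<bar>z\<bar> powr (p - 4) * t * v\<^sup>2\<bar>
    \<le> 4 * p * \<mu> powr (-1 / (p - 2)) * N * ((p * (p - 1) * \<bar>z\<bar> powr (p - 2) + 2 * \<mu>) * v\<^sup>2)"
proof -
  define m where "m = \<mu> powr (1 / (p - 2))"
  have m: "m > 0" and "m powr (p - 2) = \<mu>" and "\<mu> powr (-1 / (p - 2)) = 1 / m"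
    using p \<mu> by (simp_all add: m_def powr_powr powr_minus_divide)
  have "\<bar>z * \<bar>z\<bar> powr (p - 4)\<bar> = \<bar>z\<bar> powr (p - 3)"
    using powr_add[of "\<bar>z\<bar>" "p - 4" 1] by (cases "z = 0") (simp_all add: abs_mult)
  then have "\<bar>p * (p - 1) * (p - 2) * z * \<bar>z\<bar> powr (p - 4) * t * v\<^sup>2\<bar>
      = p * v\<^sup>2 * \<bar>t\<bar> * ((p - 1) * (p - 2) * \<bar>z\<bar> powr (p - 3))"
    using p by (simp add: abs_mult mult_ac)
  also have "\<dots> \<le> p * v\<^sup>2 * N * (4 / m * (p * (p - 1) * \<bar>z\<bar> powr (p - 2) + \<mu>))"
  proof (rule mult_mono)
    show "(p - 1) * (p - 2) * \<bar>z\<bar> powr (p - 3) \<le> 4 / m * (p * (p - 1) * \<bar>z\<bar> powr (p - 2) + \<mu>)"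
      using powr_pred_bound[OF p m, of "\<bar>z\<bar>"] \<open>m powr (p - 2) = \<mu>\<close> by simp
  qed (use p t in \<open>auto intro: mult_left_mono\<close>)
  also have "\<dots> \<le> p * v\<^sup>2 * N * (4 / m * (p * (p - 1) * \<bar>z\<bar> powr (p - 2) + 2 * \<mu>))"
    using p t m \<mu> by (intro mult_left_mono) auto
  also have "\<dots> = 4 * p * \<mu> powr (-1 / (p - 2)) * N * ((p * (p - 1) * \<bar>z\<bar> powr (p - 2) + 2 * \<mu>) * v\<^sup>2)"
    using \<open>\<mu> powr (-1 / (p - 2)) = 1 / m\<close> by simp
  finally show ?thesis .
qed

lemma abs_le_norm2:
  assumes "i < n"
  shows "\<bar>w i\<bar> \<le> norm2 n w"
proof -
  have "(w i)\<^sup>2 \<le> (\<Sum>j<n. (w j)\<^sup>2)"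
    using assms by (intro member_le_sum) auto
  then show ?thesis
    unfolding norm2_def by (metis real_sqrt_abs real_sqrt_le_mono)
qed

theorem lemma10:
  shows "\<exists>C>0. \<forall>(n::nat) (p::real) (\<mu>::real) (b::nat\<Rightarrow>real) (y::nat\<Rightarrow>real) (x::nat\<Rightarrow>real) (u::nat\<Rightarrow>real) (w::nat\<Rightarrow>real).
           p \<ge> 3 \<and> \<mu> > 0 \<and> (p > 3 \<or> (\<forall>i<n. x i \<noteq> b i)) \<longrightarrow>
           \<bar>third_form (hfun n p \<mu> b y) x u w\<bar>
             \<le> C * p * \<mu> powr (-1 / (p - 2)) * norm2 n w * hess_form (hfun n p \<mu> b y) x u"
proof (intro exI[of _ 4] conjI allI impI)
  fix n :: nat and p \<mu> :: real and b y x u w :: "nat \<Rightarrow> real"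
  assume "p \<ge> 3 \<and> \<mu> > 0 \<and> (p > 3 \<or> (\<forall>i<n. x i \<noteq> b i))"
  then have p: "p \<ge> 3" and \<mu>: "\<mu> > 0" and smooth: "p > 3 \<or> (\<forall>i<n. x i \<noteq> b i)"
    by auto
  let ?K = "4 * p * \<mu> powr (-1 / (p - 2)) * norm2 n w"
  have "\<bar>third_form (hfun n p \<mu> b y) x u w\<bar>
      \<le> (\<Sum>i<n. \<bar>p * (p - 1) * (p - 2) * (x i - b i) * \<bar>x i - b i\<bar> powr (p - 4) * w i * (u i)\<^sup>2\<bar>)"
    using p smooth by (simp add: third_form_hfun sum_abs)
  also have "\<dots> \<le> (\<Sum>i<n. ?K * ((p * (p - 1) * \<bar>x i - b i\<bar> powr (p - 2) + 2 * \<mu>) * (u i)\<^sup>2))"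
    using p \<mu> by (intro sum_mono third_order_term_bound abs_le_norm2) auto
  also have "\<dots> = ?K * hess_form (hfun n p \<mu> b y) x u"
    using p by (simp add: hess_form_hfun sum_distrib_left)
  finally show "\<bar>third_form (hfun n p \<mu> b y) x u w\<bar>
      \<le> 4 * p * \<mu> powr (-1 / (p - 2)) * norm2 n w * hess_form (hfun n p \<mu> b y) x u" .
qed simp

end
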